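(* Let $G$ be a finitely generated non-abelian free group and let $X$ be a finite generating set of $G$. Then no positive cone of $G$ is a coarsely connected subset of the Cayley graph $\Gamma(G,X)$.
   Context: A positive cone of a group $G$ is a subsemigroup $P\subseteq G$ with $G=P\sqcup P^{-1}\sqcup\{1\}$. $G$ is given the word metric $d_X$ of $\Gamma(G,X)$. For $r\geq1$, an $r$-path is a finite sequence $g_0,\dots,g_n$ in $G$ with $d_X(g_i,g_{i+1})\le r$ for all $i$. A subset $S\subseteq G$ is coarsely connected if there exists $r\geq 1$ such that any two elements of $S$ are joined by an $r$-path all of whose terms lie in $S$ (equivalently, some $r$-neighbourhood of $S$ spans a connected subgraph). *)

theory Defs
  imports "HOL-Algebra.Algebra"
begin

text \<open>Words over an alphabet: a letter (True, x) stands for x, (False, x) for x inverse.\<close>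

definition word_eval :: "('a, 'b) monoid_scheme \<Rightarrow> (bool \<times> 'a) list \<Rightarrow> 'a" where
  "word_eval G w = foldr (\<lambda>(b, x) acc. (if b then x else inv\<^bsub>G\<^esub> x) \<otimes>\<^bsub>G\<^esub> acc) w \<one>\<^bsub>G\<^esub>"

definition word_over :: "'a set \<Rightarrow> (bool \<times> 'a) list \<Rightarrow> bool" where
  "word_over S w \<longleftrightarrow> (\<forall>l \<in> set w. snd l \<in> S)"

definition reduced_word :: "(bool \<times> 'a) list \<Rightarrow> bool" where
  "reduced_word w \<longleftrightarrow>
     (\<forall>i. Suc i < length w \<longrightarrow>
        \<not> (snd (w ! i) = snd (w ! Suc i) \<and> fst (w ! i) \<noteq> fst (w ! Suc i)))"

definition free_basis :: "('a, 'b) monoid_scheme \<Rightarrow> 'a set \<Rightarrow> bool" where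
  "free_basis G S \<longleftrightarrow> S \<subseteq> carrier G \<and> generate G S = carrier G \<and>
     (\<forall>w. word_over S w \<and> reduced_word w \<and> w \<noteq> [] \<longrightarrow> word_eval G w \<noteq> \<one>\<^bsub>G\<^esub>)"

definition free_group :: "('a, 'b) monoid_scheme \<Rightarrow> bool" where
  "free_group G \<longleftrightarrow> group G \<and> (\<exists>S. free_basis G S)"

definition finitely_generated :: "('a, 'b) monoid_scheme \<Rightarrow> bool" where
  "finitely_generated G \<longleftrightarrow> (\<exists>Y. finite Y \<and> Y \<subseteq> carrier G \<and> generate G Y = carrier G)"

text \<open>Word length with respect to Gen, and the word metric of the Cayley graph
  (edges g -- g x for x in Gen), d(g,h) = |g^-1 h|_X.\<close>
definition word_length :: "('a, 'b) monoid_scheme \<Rightarrow> 'a set \<Rightarrow> 'a \<Rightarrow> nat" where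
  "word_length G Gen g = (LEAST n. \<exists>w. length w = n \<and> word_over Gen w \<and> word_eval G w = g)"

definition word_dist :: "('a, 'b) monoid_scheme \<Rightarrow> 'a set \<Rightarrow> 'a \<Rightarrow> 'a \<Rightarrow> nat" where
  "word_dist G Gen g h = word_length G Gen (inv\<^bsub>G\<^esub> g \<otimes>\<^bsub>G\<^esub> h)"

definition positive_cone :: "('a, 'b) monoid_scheme \<Rightarrow> 'a set \<Rightarrow> bool" where
  "positive_cone G P \<longleftrightarrow> P \<subseteq> carrier G \<and>
     (\<forall>x \<in> P. \<forall>y \<in> P. x \<otimes>\<^bsub>G\<^esub> y \<in> P) \<and>
     carrier G = P \<union> (\<lambda>x. inv\<^bsub>G\<^esub> x) ` P \<union> {\<one>\<^bsub>G\<^esub>} \<and>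
     P \<inter> (\<lambda>x. inv\<^bsub>G\<^esub> x) ` P = {} \<and>
     \<one>\<^bsub>G\<^esub> \<notin> P \<and> \<one>\<^bsub>G\<^esub> \<notin> (\<lambda>x. inv\<^bsub>G\<^esub> x) ` P"

definition r_path_in :: "('a, 'b) monoid_scheme \<Rightarrow> 'a set \<Rightarrow> nat \<Rightarrow> 'a set \<Rightarrow> 'a \<Rightarrow> 'a \<Rightarrow> bool" where
  "r_path_in G Gen r S a b \<longleftrightarrow>
     (\<exists>ps. ps \<noteq> [] \<and> hd ps = a \<and> last ps = b \<and> set ps \<subseteq> S \<and>
        (\<forall>i. Suc i < length ps \<longrightarrow> word_dist G Gen (ps ! i) (ps ! Suc i) \<le> r))"

definition coarsely_connected :: "('a, 'b) monoid_scheme \<Rightarrow> 'a set \<Rightarrow> 'a set \<Rightarrow> bool" where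
  "coarsely_connected G Gen S \<longleftrightarrow>
     (\<exists>r::nat. r \<ge> 1 \<and> (\<forall>a \<in> S. \<forall>b \<in> S. r_path_in G Gen r S a b))"

end

theory Submission
  imports Defs "HOL-Library.Sublist"
begin

text \<open>Let P be a positive cone of a free group with basis S of at least two elements, and suppose
  P is r-coarsely connected. For u \<noteq> 1 with reduced spelling U, P meets the cylinder of
  elements whose reduced spelling begins with U (it contains U s U\<inverse> or its inverse)
  and is not contained in it (it contains s or s\<inverse> for a basis element s other than
  the first letter of U). An r-path in P thus steps from some x inside the cylinder to some x
  w outside it with |w| \<le> r, and this forces x = u t where t\<inverse> is a prefix of the
  reduced spelling of w. So u t \<in> P for some t in a finite set T depending only on r. In
  the order defined by P this says that every element lies below the maximum of T \<union>
  {1}, impossible in a nontrivial left-ordered group.\<close>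

subsection \<open>Reduced words\<close>

definition cancels :: "bool \<times> 'a \<Rightarrow> bool \<times> 'a \<Rightarrow> bool" where
  "cancels a b \<longleftrightarrow> snd a = snd b \<and> fst a \<noteq> fst b"

lemma reduced_word_Nil [simp]: "reduced_word []"
  and reduced_word_singleton [simp]: "reduced_word [a]"
  by (simp_all add: reduced_word_def)

lemma reduced_word_Cons_Cons [simp]:
  "reduced_word (a # b # w) \<longleftrightarrow> \<not> cancels a b \<and> reduced_word (b # w)"
  unfolding reduced_word_def cancels_def
proof (intro iffI conjI allI impI)
  fix i
  assume "\<not> (snd a = snd b \<and> fst a \<noteq> fst b) \<and>
      (\<forall>i. Suc i < length (b # w) \<longrightarrow> \<not> (snd ((b # w) ! i) = snd ((b # w) ! Suc i) \<and>
         fst ((b # w) ! i) \<noteq> fst ((b # w) ! Suc i)))"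
    and "Suc i < length (a # b # w)"
  then show "\<not> (snd ((a # b # w) ! i) = snd ((a # b # w) ! Suc i) \<and>
      fst ((a # b # w) ! i) \<noteq> fst ((a # b # w) ! Suc i))"
    by (cases i) auto
qed (auto dest: spec[of _ 0] spec[of _ "Suc _"])

lemma reduced_word_Cons:
  "reduced_word (a # w) \<longleftrightarrow> reduced_word w \<and> (w \<noteq> [] \<longrightarrow> \<not> cancels a (hd w))"
  by (cases w) auto

lemma reduced_word_append:
  "reduced_word (u @ w) \<longleftrightarrow>
     reduced_word u \<and> reduced_word w \<and> (u \<noteq> [] \<and> w \<noteq> [] \<longrightarrow> \<not> cancels (last u) (hd w))"
  by (induction u) (auto simp: reduced_word_Cons)

definition letter_inv :: "bool \<times> 'a \<Rightarrow> bool \<times> 'a" where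
  "letter_inv a = (\<not> fst a, snd a)"

definition word_inv :: "(bool \<times> 'a) list \<Rightarrow> (bool \<times> 'a) list" where
  "word_inv w = rev (map letter_inv w)"

lemma letter_inv_letter_inv [simp]: "letter_inv (letter_inv a) = a"
  by (simp add: letter_inv_def)

lemma snd_letter_inv [simp]: "snd (letter_inv a) = snd a"
  by (simp add: letter_inv_def)

lemma cancels_letter_inv: "cancels (letter_inv b) (letter_inv a) \<longleftrightarrow> cancels a b"
  by (auto simp: cancels_def letter_inv_def)

lemma cancels_iff_letter_inv: "cancels a b \<longleftrightarrow> b = letter_inv a"
  by (cases a; cases b) (auto simp: cancels_def letter_inv_def)

lemma word_inv_Nil [simp]: "word_inv [] = []"
  and word_inv_Cons [simp]: "word_inv (a # w) = word_inv w @ [letter_inv a]"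
  and word_inv_append [simp]: "word_inv (u @ w) = word_inv w @ word_inv u"
  and word_inv_word_inv [simp]: "word_inv (word_inv w) = w"
  and word_inv_eq_Nil_iff [simp]: "word_inv w = [] \<longleftrightarrow> w = []"
  by (simp_all add: word_inv_def rev_map comp_def)

lemma hd_word_inv: "w \<noteq> [] \<Longrightarrow> hd (word_inv w) = letter_inv (last w)"
  and last_word_inv: "w \<noteq> [] \<Longrightarrow> last (word_inv w) = letter_inv (hd w)"
  by (simp_all add: word_inv_def hd_rev last_rev hd_map last_map)

lemma reduced_word_word_inv [simp]: "reduced_word (word_inv w) \<longleftrightarrow> reduced_word w"
proof (induction w)
  case (Cons a w)
  then show ?case
    by (simp only: word_inv_Cons reduced_word_append)
      (auto simp: last_word_inv cancels_letter_inv reduced_word_Cons)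
qed simp

lemma reduced_word_word_inv_append:
  assumes "reduced_word u" "reduced_word w" "u \<noteq> [] \<and> w \<noteq> [] \<longrightarrow> hd u \<noteq> hd w"
  shows "reduced_word (word_inv u @ w)"
  using assms by (auto simp: reduced_word_append last_word_inv cancels_iff_letter_inv)

lemma reduced_word_cancellation:
  assumes "reduced_word u" "reduced_word w"
  shows "\<exists>u' t w'. u = u' @ t \<and> w = word_inv t @ w' \<and> reduced_word (u' @ w')"
  using assms
proof (induction u arbitrary: w rule: rev_induct)
  case Nil
  then show ?case by force
next
  case (snoc a u)
  show ?case
  proof (cases "w \<noteq> [] \<and> cancels a (hd w)")
    case True
    then obtain w0 where w: "w = letter_inv a # w0"
      by (cases w) (auto simp: cancels_iff_letter_inv)
    have "reduced_word u" "reduced_word w0"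
      using snoc.prems w by (simp_all add: reduced_word_append reduced_word_Cons)
    then obtain u' t w' where "u = u' @ t" "w0 = word_inv t @ w'" "reduced_word (u' @ w')"
      using snoc.IH by blast
    with w show ?thesis by (intro exI[of _ u'] exI[of _ "t @ [a]"] exI[of _ w']) simp
  next
    case False
    with snoc.prems show ?thesis
      by (intro exI[of _ "u @ [a]"] exI[of _ "[]"] exI[of _ w])
        (auto simp: reduced_word_append reduced_word_Cons)
  qed
qed

lemma word_over_Nil [simp]: "word_over A []"
  and word_over_Cons [simp]: "word_over A (a # w) \<longleftrightarrow> snd a \<in> A \<and> word_over A w"
  and word_over_append [simp]: "word_over A (u @ w) \<longleftrightarrow> word_over A u \<and> word_over A w"
  and word_over_word_inv [simp]: "word_over A (word_inv w) \<longleftrightarrow> word_over A w"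
  by (auto simp: word_over_def word_inv_def)

lemma word_over_mono: "word_over A w \<Longrightarrow> A \<subseteq> B \<Longrightarrow> word_over B w"
  by (auto simp: word_over_def)

lemma word_over_prefix: "word_over A w \<Longrightarrow> prefix u w \<Longrightarrow> word_over A u"
  by (auto simp: prefix_def)

lemma finite_words_length_le:
  assumes "finite A"
  shows "finite {w. word_over A w \<and> length w \<le> n}"
proof -
  have "{w. word_over A w \<and> length w \<le> n} = {w. set w \<subseteq> UNIV \<times> A \<and> length w \<le> n}"
    by (auto simp: word_over_def)
  moreover have "finite (UNIV \<times> A :: (bool \<times> 'a) set)"
    using assms by simp
  ultimately show ?thesis
    using finite_lists_length_le by simp
qed

subsection \<open>Words in a group\<close>

definition letter_eval :: "('a, 'b) monoid_scheme \<Rightarrow> bool \<times> 'a \<Rightarrow> 'a" where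
  "letter_eval G a = (if fst a then snd a else inv\<^bsub>G\<^esub> (snd a))"

lemma word_eval_Nil [simp]: "word_eval G [] = \<one>\<^bsub>G\<^esub>"
  and word_eval_Cons [simp]: "word_eval G (a # w) = letter_eval G a \<otimes>\<^bsub>G\<^esub> word_eval G w"
  by (cases a; simp add: word_eval_def letter_eval_def)+

definition word_ball :: "('a, 'b) monoid_scheme \<Rightarrow> 'a set \<Rightarrow> nat \<Rightarrow> 'a set" where
  "word_ball G Gen r = word_eval G ` {w. word_over Gen w \<and> length w \<le> r}"

lemma finite_word_ball: "finite Gen \<Longrightarrow> finite (word_ball G Gen r)"
  by (simp add: word_ball_def finite_words_length_le)

context group
begin

lemma letter_eval_closed [simp]: "snd a \<in> carrier G \<Longrightarrow> letter_eval G a \<in> carrier G"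
  by (simp add: letter_eval_def)

lemma letter_eval_letter_inv:
  "snd a \<in> carrier G \<Longrightarrow> letter_eval G (letter_inv a) = inv (letter_eval G a)"
  by (simp add: letter_eval_def letter_inv_def)

lemma word_eval_closed [simp]: "word_over (carrier G) w \<Longrightarrow> word_eval G w \<in> carrier G"
  by (induction w) auto

lemma word_eval_append:
  "word_over (carrier G) u \<Longrightarrow> word_over (carrier G) w \<Longrightarrow>
     word_eval G (u @ w) = word_eval G u \<otimes> word_eval G w"
  by (induction u) (auto simp: m_assoc)

lemma word_eval_word_inv:
  "word_over (carrier G) w \<Longrightarrow> word_eval G (word_inv w) = inv (word_eval G w)"
  by (induction w) (auto simp: word_eval_append letter_eval_letter_inv inv_mult_group)

lemma word_eval_cancels:
  "cancels a b \<Longrightarrow> snd a \<in> carrier G \<Longrightarrow> letter_eval G a \<otimes> letter_eval G b = \<one>"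
  by (auto simp: cancels_iff_letter_inv letter_eval_letter_inv)

lemma generate_imp_word:
  assumes "A \<subseteq> carrier G" "g \<in> generate G A"
  shows "\<exists>w. word_over A w \<and> word_eval G w = g"
  using assms(2)
proof (induction rule: generate.induct)
  case one
  show ?case by (intro exI[of _ "[]"]) simp
next
  case (incl h)
  with assms(1) show ?case by (intro exI[of _ "[(True, h)]"]) (auto simp: letter_eval_def)
next
  case (inv h)
  with assms(1) show ?case by (intro exI[of _ "[(False, h)]"]) (auto simp: letter_eval_def)
next
  case (eng g h)
  then obtain u w where "word_over A u" "word_eval G u = g" "word_over A w" "word_eval G w = h"
    by blast
  moreover have "word_over (carrier G) u" "word_over (carrier G) w"
    using calculation assms(1) word_over_mono by blast+
  ultimately show ?case
    by (intro exI[of _ "u @ w"]) (simp add: word_eval_append)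
qed

lemma reduced_word_exists:
  assumes "A \<subseteq> carrier G" "word_over A w"
  shows "\<exists>u. reduced_word u \<and> word_over A u \<and> word_eval G u = word_eval G w"
  using assms(2)
proof (induction w)
  case Nil
  show ?case by (intro exI[of _ "[]"]) simp
next
  case (Cons a w)
  then obtain u where u: "reduced_word u" "word_over A u" "word_eval G u = word_eval G w"
    by auto
  have a: "snd a \<in> carrier G" and uc: "word_over (carrier G) u"
    using Cons.prems u(2) assms(1) by (auto dest: word_over_mono)
  show ?case
  proof (cases "u \<noteq> [] \<and> cancels a (hd u)")
    case True
    then obtain b u' where u': "u = b # u'" "cancels a b" by (cases u) auto
    have "word_eval G (a # w) = (letter_eval G a \<otimes> letter_eval G b) \<otimes> word_eval G u'"
      using u(3) u' a uc by (simp add: m_assoc)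
    also have "\<dots> = word_eval G u'"
      using word_eval_cancels[OF u'(2) a] u' uc by simp
    finally show ?thesis
      using u u' by (intro exI[of _ u']) (auto simp: reduced_word_Cons)
  next
    case False
    with u Cons.prems show ?thesis
      by (intro exI[of _ "a # u"]) (auto simp: reduced_word_Cons)
  qed
qed

lemma word_ball_subset:
  assumes "Gen \<subseteq> carrier G"
  shows "word_ball G Gen r \<subseteq> carrier G"
  by (auto simp: word_ball_def dest: word_over_mono[OF _ assms])

lemma word_dist_le_imp_in_word_ball:
  assumes "Gen \<subseteq> carrier G" "generate G Gen = carrier G" "x \<in> carrier G" "y \<in> carrier G"
    and "word_dist G Gen x y \<le> r"
  shows "inv x \<otimes> y \<in> word_ball G Gen r"
proof -
  let ?spells = "\<lambda>n. \<exists>w. length w = n \<and> word_over Gen w \<and> word_eval G w = inv x \<otimes> y"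
  have "\<exists>n. ?spells n"
    using generate_imp_word[OF assms(1)] assms(2-4) by auto
  then have "?spells (word_length G Gen (inv x \<otimes> y))"
    unfolding word_length_def by (rule LeastI_ex)
  with assms(5) show ?thesis by (force simp: word_dist_def word_ball_def)
qed

lemma comm_group_if_generated_by_singleton:
  assumes "S \<subseteq> {a}" "a \<in> carrier G" "generate G S = carrier G"
  shows "comm_group G"
proof (rule group_comm_groupI)
  fix x y
  assume "x \<in> carrier G" "y \<in> carrier G"
  moreover have "carrier G \<subseteq> generate G {a}"
    using assms mono_generate by blast
  ultimately obtain i j :: int where "x = a [^] i" "y = a [^] j"
    using generate_pow[OF assms(2)] by blast
  then show "x \<otimes> y = y \<otimes> x"
    using assms(2) by (simp add: int_pow_mult[symmetric] add.commute)
qed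

end

lemma list_exit_index:
  assumes "xs \<noteq> []" "hd xs \<in> A" "last xs \<notin> A"
  shows "\<exists>i. Suc i < length xs \<and> xs ! i \<in> A \<and> xs ! Suc i \<notin> A"
  using assms
proof (induction xs)
  case (Cons a xs)
  show ?case
  proof (cases "hd xs \<in> A")
    case True
    with Cons obtain i where "Suc i < length xs" "xs ! i \<in> A" "xs ! Suc i \<notin> A"
      by (cases xs) auto
    then show ?thesis by (intro exI[of _ "Suc i"]) simp
  next
    case False
    with Cons.prems show ?thesis by (intro exI[of _ 0]) (cases xs; auto)
  qed
qed simp

lemma r_path_in_exit:
  assumes "r_path_in G Gen r S a b" "a \<in> C" "b \<notin> C"
  shows "\<exists>x \<in> S \<inter> C. \<exists>y \<in> S - C. word_dist G Gen x y \<le> r"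
proof -
  obtain ps where ps: "ps \<noteq> []" "hd ps = a" "last ps = b" "set ps \<subseteq> S"
    "\<And>i. Suc i < length ps \<Longrightarrow> word_dist G Gen (ps ! i) (ps ! Suc i) \<le> r"
    using assms(1) unfolding r_path_in_def by blast
  then obtain i where "Suc i < length ps" "ps ! i \<in> C" "ps ! Suc i \<notin> C"
    using list_exit_index[of ps C] assms(2,3) by auto
  moreover have "ps ! i \<in> S" "ps ! Suc i \<in> S"
    using ps(4) calculation(1) by (simp_all add: subsetD)
  ultimately show ?thesis
    using ps(5) by blast
qed

subsection \<open>Positive cones\<close>

context group
begin

lemma positive_cone_subset: "positive_cone G P \<Longrightarrow> P \<subseteq> carrier G"
  and positive_cone_mult: "positive_cone G P \<Longrightarrow> x \<in> P \<Longrightarrow> y \<in> P \<Longrightarrow> x \<otimes> y \<in> P"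
  and positive_cone_one: "positive_cone G P \<Longrightarrow> \<one> \<notin> P"
  unfolding positive_cone_def by blast+

lemma positive_cone_or_inv:
  assumes "positive_cone G P" "x \<in> carrier G" "x \<noteq> \<one>"
  shows "x \<in> P \<or> inv x \<in> P"
proof -
  have "x \<in> P \<union> (\<lambda>x. inv x) ` P"
    using assms unfolding positive_cone_def by blast
  with positive_cone_subset[OF assms(1)] show ?thesis by auto
qed

lemma positive_cone_inv_notin:
  assumes "positive_cone G P" "x \<in> P"
  shows "inv x \<notin> P"
proof
  assume "inv x \<in> P"
  then have "x \<otimes> inv x \<in> P" using assms positive_cone_mult by blast
  with assms positive_cone_subset positive_cone_one show False by fastforce
qed

text \<open>P defines the left-invariant order g < h iff inv g \<otimes> h \<in> P; here M is the maximum of T.\<close>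
lemma positive_cone_finite_max:
  assumes "positive_cone G P" "finite T" "T \<noteq> {}" "T \<subseteq> carrier G"
  shows "\<exists>M\<in>T. \<forall>t\<in>T. t = M \<or> inv t \<otimes> M \<in> P"
  using assms(2-4)
proof (induction T rule: finite_ne_induct)
  case (insert x T)
  then obtain M where M: "M \<in> T" "\<forall>t\<in>T. t = M \<or> inv t \<otimes> M \<in> P"
    by auto
  have x: "x \<in> carrier G" and Mc: "M \<in> carrier G"
    using insert M by auto
  show ?case
  proof (cases "inv x \<otimes> M \<in> P")
    case True
    with M show ?thesis by auto
  next
    case False
    have "inv x \<otimes> M \<noteq> \<one>"
    proof
      assume "inv x \<otimes> M = \<one>"
      have "M = x \<otimes> (inv x \<otimes> M)" using x Mc by (simp add: m_assoc[symmetric])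
      also have "\<dots> = x" using \<open>inv x \<otimes> M = \<one>\<close> x by simp
      finally have "M = x" .
      with M insert.hyps show False by blast
    qed
    with False have xM: "inv M \<otimes> x \<in> P"
      using positive_cone_or_inv[OF assms(1), of "inv x \<otimes> M"] x Mc by (simp add: inv_mult_group)
    have "inv t \<otimes> x \<in> P" if "t \<in> T" "t \<noteq> M" for t
    proof -
      have "t \<in> carrier G" using that insert.prems by auto
      moreover have "(inv t \<otimes> M) \<otimes> (inv M \<otimes> x) \<in> P"
        using that M xM positive_cone_mult[OF assms(1)] by blast
      ultimately show ?thesis
        using x Mc by (simp add: m_assoc[symmetric]) (simp add: m_assoc)
    qed
    with xM show ?thesis by blast
  qed
qed simp

text \<open>u \<otimes> t \<in> P says that inv u lies below t, so every element would lie below the maximum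
  of T \<union> {\<one>}; but there is no largest element.\<close>
lemma positive_cone_finite_cofinal_imp_trivial:
  assumes P: "positive_cone G P" and T: "finite T" "T \<subseteq> carrier G"
    and cofinal: "\<And>u. u \<in> carrier G \<Longrightarrow> u \<noteq> \<one> \<Longrightarrow> \<exists>t\<in>T. u \<otimes> t \<in> P"
  shows "carrier G = {\<one>}"
proof (rule ccontr)
  assume "carrier G \<noteq> {\<one>}"
  then obtain g where g: "g \<in> carrier G" "g \<noteq> \<one>" by blast
  have "finite (insert \<one> T)" "insert \<one> T \<subseteq> carrier G"
    using T by auto
  then obtain M where M: "M \<in> insert \<one> T" "\<forall>t\<in>insert \<one> T. t = M \<or> inv t \<otimes> M \<in> P"
    using positive_cone_finite_max[OF P _ insert_not_empty] by blast
  have Mc: "M \<in> carrier G" using M T by auto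
  have "\<exists>u\<in>carrier G. u \<noteq> \<one> \<and> inv (u \<otimes> M) \<in> P"
  proof (cases "M = \<one>")
    case True
    from positive_cone_or_inv[OF P g] show ?thesis
    proof
      assume "g \<in> P"
      with g True show ?thesis by (intro bexI[of _ "inv g"]) auto
    next
      assume "inv g \<in> P"
      with g True show ?thesis by (intro bexI[of _ g]) auto
    qed
  next
    case False
    then have "M \<in> P" using M Mc by auto
    moreover have "M \<otimes> M \<in> P" using positive_cone_mult[OF P] calculation by blast
    then have "inv (M \<otimes> M) \<noteq> \<one>"
      using Mc positive_cone_one[OF P] inv_eq_1_iff[of "M \<otimes> M"] by auto
    ultimately show ?thesis using Mc
      by (intro bexI[of _ "inv (M \<otimes> M)"]) (auto simp: inv_mult_group m_assoc)
  qed
  then obtain u where u: "u \<in> carrier G" "u \<noteq> \<one>" "inv (u \<otimes> M) \<in> P" by blast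
  then obtain t where t: "t \<in> T" "u \<otimes> t \<in> P" using cofinal by blast
  have tc: "t \<in> carrier G" using t T by auto
  have "u \<otimes> M \<in> P"
  proof (cases "t = M")
    case False
    then have "(u \<otimes> t) \<otimes> (inv t \<otimes> M) \<in> P"
      using M t positive_cone_mult[OF P] by blast
    then show ?thesis using u tc Mc by (simp add: m_assoc[symmetric]) (simp add: m_assoc)
  qed (use t in simp)
  with u positive_cone_inv_notin[OF P] show False by blast
qed

end

subsection \<open>Free groups\<close>

locale free_basis_group = group +
  fixes S :: "'a set"
  assumes free_basis: "free_basis G S"
begin

lemma basis_subset: "S \<subseteq> carrier G"
  and generate_basis: "generate G S = carrier G"
  and reduced_word_eval_ne_one:
    "word_over S w \<Longrightarrow> reduced_word w \<Longrightarrow> w \<noteq> [] \<Longrightarrow> word_eval G w \<noteq> \<one>"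
  using free_basis by (auto simp: free_basis_def)

lemma word_over_basis_imp_carrier: "word_over S w \<Longrightarrow> word_over (carrier G) w"
  using basis_subset word_over_mono by blast

lemma basis_ne_one: "s \<in> S \<Longrightarrow> s \<noteq> \<one>"
  using reduced_word_eval_ne_one[of "[(True, s)]"] basis_subset by (auto simp: letter_eval_def)

lemma basis_two_elements_if_not_comm:
  assumes "\<not> comm_group G"
  obtains s1 s2 where "s1 \<in> S" "s2 \<in> S" "s1 \<noteq> s2"
proof -
  have "\<not> S \<subseteq> {a}" if "a \<in> carrier G" for a
    using comm_group_if_generated_by_singleton[OF _ that generate_basis] assms by blast
  then have "\<not> S \<subseteq> {\<one>}" "\<And>s. s \<in> S \<Longrightarrow> \<not> S \<subseteq> {s}"
    using basis_subset by blast+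
  then show thesis using that by blast
qed

lemma reduced_word_eval_inj:
  "reduced_word u \<Longrightarrow> reduced_word w \<Longrightarrow> word_over S u \<Longrightarrow> word_over S w \<Longrightarrow>
     word_eval G u = word_eval G w \<Longrightarrow> u = w"
proof (induction u arbitrary: w)
  case Nil
  then show ?case using reduced_word_eval_ne_one by fastforce
next
  case (Cons a u)
  show ?case
  proof (cases "w \<noteq> [] \<and> hd w = a")
    case True
    then obtain w' where w: "w = a # w'" by (cases w) auto
    have "word_eval G u = word_eval G w'"
      using Cons.prems w basis_subset word_over_basis_imp_carrier by auto
    with Cons show ?thesis by (simp add: w reduced_word_Cons)
  next
    case False
    then have "reduced_word (word_inv (a # u) @ w)"
      using Cons.prems by (intro reduced_word_word_inv_append) auto
    moreover have "word_eval G (word_inv (a # u) @ w) = \<one>"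
      using Cons.prems word_over_basis_imp_carrier
      by (simp only: word_eval_append word_eval_word_inv word_over_word_inv) simp
    ultimately show ?thesis
      using reduced_word_eval_ne_one[of "word_inv (a # u) @ w"] Cons.prems by auto
  qed
qed

definition normal_form :: "'a \<Rightarrow> (bool \<times> 'a) list" where
  "normal_form g = (THE w. reduced_word w \<and> word_over S w \<and> word_eval G w = g)"

lemma ex1_normal_form:
  assumes "g \<in> carrier G"
  shows "\<exists>!w. reduced_word w \<and> word_over S w \<and> word_eval G w = g"
proof -
  obtain w where "word_over S w" "word_eval G w = g"
    using generate_imp_word[OF basis_subset] generate_basis assms by auto
  then show ?thesis
    using reduced_word_exists[OF basis_subset] reduced_word_eval_inj by metis
qed

lemma normal_form:
  assumes "g \<in> carrier G"
  shows "reduced_word (normal_form g)" "word_over S (normal_form g)"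
    "word_eval G (normal_form g) = g"
  using theI'[OF ex1_normal_form[OF assms]] unfolding normal_form_def by auto

lemma normal_form_word_eval:
  assumes "reduced_word w" "word_over S w"
  shows "normal_form (word_eval G w) = w"
  unfolding normal_form_def
  using assms word_over_basis_imp_carrier
  by (intro the1_equality ex1_normal_form) auto

definition cylinder :: "(bool \<times> 'a) list \<Rightarrow> 'a set" where
  "cylinder u = {g \<in> carrier G. prefix u (normal_form g)}"

text \<open>Leaving the cylinder of u requires cancelling all of the spelling of x beyond u; that
  part is then the inverse of a prefix of the spelling of w.\<close>
lemma cylinder_exit:
  assumes x: "x \<in> cylinder u" and w: "w \<in> carrier G" and exit: "x \<otimes> w \<notin> cylinder u"
  shows "\<exists>p. prefix p (normal_form w) \<and> x = word_eval G u \<otimes> word_eval G (word_inv p)"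
proof -
  have xc: "x \<in> carrier G" using x by (simp add: cylinder_def)
  obtain v where xv: "normal_form x = u @ v"
    using x by (auto simp: cylinder_def prefix_def)
  obtain x' t w' where xt: "normal_form x = x' @ t" and wt: "normal_form w = word_inv t @ w'"
    and red: "reduced_word (x' @ w')"
    using reduced_word_cancellation normal_form(1) xc w by blast
  have over: "word_over S x'" "word_over S t" "word_over S w'" "word_over S u" "word_over S v"
    using normal_form(2)[OF xc, unfolded xt] normal_form(2)[OF w, unfolded wt]
      normal_form(2)[OF xc, unfolded xv] by simp_all
  note carr = over[THEN word_over_basis_imp_carrier]
  have "x \<otimes> w = word_eval G (x' @ t) \<otimes> word_eval G (word_inv t @ w')"
    using normal_form(3) xc w xt wt by metis
  also have "\<dots> = word_eval G (x' @ w')"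
    using carr by (simp add: word_eval_append word_eval_word_inv m_assoc[symmetric])
      (simp add: m_assoc)
  finally have "normal_form (x \<otimes> w) = x' @ w'"
    using normal_form_word_eval[OF red] over by simp
  with exit xc w have "\<not> prefix u x'"
    by (auto simp: cylinder_def prefix_def)
  moreover have "u @ v = x' @ t" using xv xt by simp
  ultimately obtain us where "u = x' @ us" "t = us @ v"
    by (auto simp: append_eq_append_conv2 prefix_def)
  then have "prefix (word_inv v) (normal_form w)"
    using wt by simp
  moreover have "x = word_eval G u \<otimes> word_eval G v"
    using normal_form(3)[OF xc, unfolded xv] carr by (simp add: word_eval_append)
  ultimately show ?thesis
    by (intro exI[of _ "word_inv v"]) simp
qed

text \<open>Both u s u\<inverse> and its inverse u s\<inverse> u\<inverse> are reduced as written.\<close>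
lemma positive_cone_meets_cylinder:
  assumes P: "positive_cone G P" and u: "reduced_word u" "word_over S u" "u \<noteq> []"
    and s: "s \<in> S" "s \<noteq> snd (last u)"
  shows "P \<inter> cylinder u \<noteq> {}"
proof -
  define z where "z = u @ [(True, s)] @ word_inv u"
  have z: "reduced_word z" "word_over S z" "z \<noteq> []"
    using u s by (auto simp: z_def reduced_word_append reduced_word_Cons hd_word_inv cancels_def
      letter_inv_def)
  have zi: "word_inv z = u @ [(False, s)] @ word_inv u"
    by (simp add: z_def letter_inv_def)
  have "normal_form (word_eval G z) = z" "normal_form (word_eval G (word_inv z)) = word_inv z"
    using z by (simp_all add: normal_form_word_eval)
  moreover have "prefix u z" "prefix u (word_inv z)"
    unfolding zi by (simp_all add: z_def)
  moreover have "word_eval G (word_inv z) = inv (word_eval G z)"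
    using z word_over_basis_imp_carrier word_eval_word_inv by blast
  ultimately have "word_eval G z \<in> cylinder u" "inv (word_eval G z) \<in> cylinder u"
    using z word_over_basis_imp_carrier by (auto simp: cylinder_def)
  moreover have "word_eval G z \<in> P \<or> inv (word_eval G z) \<in> P"
    using positive_cone_or_inv[OF P] reduced_word_eval_ne_one z word_over_basis_imp_carrier
    by simp
  ultimately show ?thesis by blast
qed

lemma positive_cone_not_subset_cylinder:
  assumes P: "positive_cone G P" and u: "u \<noteq> []" and s: "s \<in> S" "s \<noteq> snd (hd u)"
  shows "\<not> P \<subseteq> cylinder u"
proof -
  have sc: "s \<in> carrier G" using s basis_subset by auto
  obtain l where l: "snd l = s" "word_eval G [l] \<in> P"
  proof (cases "s \<in> P")
    case True
    with sc that[of "(True, s)"] show ?thesis by (simp add: letter_eval_def)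
  next
    case False
    with sc s positive_cone_or_inv[OF P sc] basis_ne_one that[of "(False, s)"] show ?thesis
      by (simp add: letter_eval_def)
  qed
  have "normal_form (word_eval G [l]) = [l]"
    using normal_form_word_eval[of "[l]"] l s by simp
  then have "word_eval G [l] \<notin> cylinder u"
    using u s l by (cases u) (auto simp: cylinder_def)
  with l show ?thesis by blast
qed

definition prefix_inverses :: "'a set \<Rightarrow> 'a set" where
  "prefix_inverses B = (\<lambda>p. word_eval G (word_inv p)) ` (\<Union>w\<in>B. set (prefixes (normal_form w)))"

lemma finite_prefix_inverses: "finite B \<Longrightarrow> finite (prefix_inverses B)"
  by (simp add: prefix_inverses_def)

lemma prefix_inverses_subset:
  assumes "B \<subseteq> carrier G"
  shows "prefix_inverses B \<subseteq> carrier G"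
proof
  fix t
  assume "t \<in> prefix_inverses B"
  then obtain w p where w: "w \<in> B" "prefix p (normal_form w)" and t: "t = word_eval G (word_inv p)"
    by (auto simp: prefix_inverses_def)
  have "word_over S (normal_form w)"
    using w(1) assms normal_form(2) by blast
  then have "word_over (carrier G) p"
    using word_over_prefix[OF _ w(2)] word_over_basis_imp_carrier by blast
  then show "t \<in> carrier G"
    by (simp add: t)
qed

lemma coarsely_connected_positive_cone_cofinal:
  assumes two: "s1 \<in> S" "s2 \<in> S" "s1 \<noteq> s2"
    and Gen: "Gen \<subseteq> carrier G" "generate G Gen = carrier G"
    and P: "positive_cone G P"
    and paths: "\<And>a b. a \<in> P \<Longrightarrow> b \<in> P \<Longrightarrow> r_path_in G Gen r P a b"
    and u: "u \<in> carrier G" "u \<noteq> \<one>"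
  shows "\<exists>t \<in> prefix_inverses (word_ball G Gen r). u \<otimes> t \<in> P"
proof -
  define U where "U = normal_form u"
  have U: "reduced_word U" "word_over S U" "U \<noteq> []" "word_eval G U = u"
    using normal_form[OF u(1)] u(2) by (auto simp: U_def)
  have "\<exists>s\<in>S. s \<noteq> a" for a
    using two by (cases "s1 = a") auto
  then obtain s s' where s: "s \<in> S" "s \<noteq> snd (last U)" and s': "s' \<in> S" "s' \<noteq> snd (hd U)"
    by meson
  obtain p q where p: "p \<in> P" "p \<in> cylinder U" and q: "q \<in> P" "q \<notin> cylinder U"
    using positive_cone_meets_cylinder[OF P U(1-3) s] positive_cone_not_subset_cylinder[OF P U(3) s']
    by blast
  obtain x y where x: "x \<in> P" "x \<in> cylinder U" and y: "y \<in> P" "y \<notin> cylinder U"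
    and dist: "word_dist G Gen x y \<le> r"
    using r_path_in_exit[OF paths[OF p(1) q(1)] p(2) q(2)] by blast
  have xy: "x \<in> carrier G" "y \<in> carrier G"
    using x(1) y(1) positive_cone_subset[OF P] by auto
  have exit: "x \<otimes> (inv x \<otimes> y) \<notin> cylinder U"
    using y(2) xy by (simp add: m_assoc[symmetric])
  obtain w where w: "prefix w (normal_form (inv x \<otimes> y))"
    and x_eq: "x = word_eval G U \<otimes> word_eval G (word_inv w)"
    using cylinder_exit[OF x(2) _ exit] xy by blast
  have "word_eval G (word_inv w) \<in> prefix_inverses (word_ball G Gen r)"
    unfolding prefix_inverses_def
    using word_dist_le_imp_in_word_ball[OF Gen xy dist] w
    by (intro imageI UN_I[of "inv x \<otimes> y"]) simp_all
  with x(1) x_eq U(4) show ?thesis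
    by auto
qed

lemma no_coarsely_connected_positive_cone:
  assumes "\<not> comm_group G"
    and Gen: "finite Gen" "Gen \<subseteq> carrier G" "generate G Gen = carrier G"
    and P: "positive_cone G P"
  shows "\<not> coarsely_connected G Gen P"
proof
  assume "coarsely_connected G Gen P"
  then obtain r where paths: "\<And>a b. a \<in> P \<Longrightarrow> b \<in> P \<Longrightarrow> r_path_in G Gen r P a b"
    by (auto simp: coarsely_connected_def)
  obtain s1 s2 where s: "s1 \<in> S" "s2 \<in> S" "s1 \<noteq> s2"
    using basis_two_elements_if_not_comm assms(1) by blast
  let ?T = "prefix_inverses (word_ball G Gen r)"
  have "finite ?T"
    using finite_prefix_inverses[OF finite_word_ball[OF Gen(1)]] .
  moreover have "?T \<subseteq> carrier G"
    using prefix_inverses_subset[OF word_ball_subset[OF Gen(2)]] .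
  ultimately have "carrier G = {\<one>}"
    using positive_cone_finite_cofinal_imp_trivial[OF P]
      coarsely_connected_positive_cone_cofinal[OF s Gen(2,3) P paths] by blast
  then have "comm_group G"
    by (intro group_comm_groupI) auto
  with assms(1) show False by contradiction
qed

end

theorem corollary1p2:
  fixes G :: "('a, 'b) monoid_scheme" and Gen :: "'a set"
  assumes "free_group G"
    and "finitely_generated G"
    and "\<not> comm_group G"
    and "finite Gen" and "Gen \<subseteq> carrier G" and "generate G Gen = carrier G"
  shows "\<not> (\<exists>P. positive_cone G P \<and> coarsely_connected G Gen P)"
proof -
  obtain S where "free_basis_group G S"
    using assms(1) by (auto simp: free_group_def free_basis_group_def free_basis_group_axioms_def)
  then show ?thesis
    using free_basis_group.no_coarsely_connected_positive_cone assms(3-6) by blast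
qed

end
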